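(* Let $n,m,c$ be positive integers and $r,s,R,S$ nonnegative integers. Let $\alpha\in\mathrm{Par}(R,r)$, $\beta\in\mathrm{Par}(S,s)$, $\lambda\in\mathrm{Par}(n-R,c)$ and $\mu\in\mathrm{Par}(m-S,c)$. Define the annular $q$-Kreweras number \[ \mathrm{Kre}_q = q^{E}\, \frac{[nm]_q}{[n]_q[m]_q} \frac{[2c]_q}{2} \frac{[n-R]_q[m-S]_q}{[c]_q^2} \begin{bmatrix}n\\ r\end{bmatrix}_q\begin{bmatrix}m\\ s\end{bmatrix}_q \begin{bmatrix}r\\ \alpha\end{bmatrix}_q \begin{bmatrix}s\\ \beta\end{bmatrix}_q \begin{bmatrix}c\\ \lambda\end{bmatrix}_q \begin{bmatrix}c\\ \mu\end{bmatrix}_q, \] where \[ E=c(c-1)+r(c+r)+s(c+s)+r(n-c-R)+s(m-c-S)+r(R-r)+s(S-s)+c(n-R-c)+c(m-S-c)-\tau(\alpha)-\tau(\beta)-\tau(\lambda)-\tau(\mu). \] Then $\mathrm{Kre}_q$ is a polynomial in $q$.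
   Context: $\mathrm{Par}(N,k)$ is the set of integer partitions of $N$ with $k$ parts. Write $\lambda=(1^{m_1},2^{m_2},\dots)$ if $\lambda$ has $m_i$ parts equal to $i$. For a partition $\lambda$ with conjugate $\lambda'$, $\tau(\lambda)=\sum_{i\ge1}\lambda'_i\lambda'_{i+1}$. The $q$-notation is $[N]_q=(1-q^N)/(1-q)$, $[N]_q!=[1]_q\cdots[N]_q$, $\begin{bmatrix}N\\k\end{bmatrix}_q=\frac{[N]_q!}{[k]_q![N-k]_q!}$, and, for $\lambda$ with $k$ parts, $\begin{bmatrix}k\\ \lambda\end{bmatrix}_q=\frac{[k]_q!}{[m_1]_q![m_2]_q!\cdots}$. "Polynomial" here means polynomial with (possibly non-integer) rational coefficients. *)

theory Defs
  imports Complex_Main "HOL-Library.Multiset" "HOL-Computational_Algebra.Polynomial"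
begin

definition Par :: "nat \<Rightarrow> nat \<Rightarrow> nat multiset set" where
  "Par N k = {lam. 0 \<notin># lam \<and> sum_mset lam = N \<and> size lam = k}"

definition conj_part :: "nat multiset \<Rightarrow> nat \<Rightarrow> nat" where
  "conj_part lam i = size (filter_mset (\<lambda>x. i \<le> x) lam)"

text \<open>tau(lam) = sum over i >= 1 of lam'_i lam'_(i+1); terms vanish for i > sum lam.\<close>
definition tau :: "nat multiset \<Rightarrow> nat" where
  "tau lam = (\<Sum>i\<in>{1..sum_mset lam}. conj_part lam i * conj_part lam (i+1))"

definition qint :: "real \<Rightarrow> nat \<Rightarrow> real" where
  "qint q N = (1 - q ^ N) / (1 - q)"

definition qfact :: "real \<Rightarrow> nat \<Rightarrow> real" where
  "qfact q N = (\<Prod>i\<in>{1..N}. qint q i)"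

definition qbinom :: "real \<Rightarrow> nat \<Rightarrow> nat \<Rightarrow> real" where
  "qbinom q N k = qfact q N / (qfact q k * qfact q (N - k))"

definition qmultinom :: "real \<Rightarrow> nat \<Rightarrow> nat multiset \<Rightarrow> real" where
  "qmultinom q k lam = qfact q k / (\<Prod>i\<in>set_mset lam. qfact q (count lam i))"

definition kre_exp :: "nat \<Rightarrow> nat \<Rightarrow> nat \<Rightarrow> nat \<Rightarrow> nat \<Rightarrow> nat \<Rightarrow> nat \<Rightarrow>
    nat multiset \<Rightarrow> nat multiset \<Rightarrow> nat multiset \<Rightarrow> nat multiset \<Rightarrow> int" where
  "kre_exp n m c r s R S alpha beta lam mu =
     (let n = int n; m = int m; c = int c; r = int r; s = int s; R = int R; S = int S in
      c*(c-1) + r*(c+r) + s*(c+s) + r*(n-c-R) + s*(m-c-S) + r*(R-r) + s*(S-s)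
      + c*(n-R-c) + c*(m-S-c)
      - int (tau alpha) - int (tau beta) - int (tau lam) - int (tau mu))"

definition annular_kre :: "real \<Rightarrow> nat \<Rightarrow> nat \<Rightarrow> nat \<Rightarrow> nat \<Rightarrow> nat \<Rightarrow> nat \<Rightarrow> nat \<Rightarrow>
    nat multiset \<Rightarrow> nat multiset \<Rightarrow> nat multiset \<Rightarrow> nat multiset \<Rightarrow> real" where
  "annular_kre q n m c r s R S alpha beta lam mu =
     q powi (kre_exp n m c r s R S alpha beta lam mu)
     * (qint q (n*m) / (qint q n * qint q m))
     * (qint q (2*c) / 2)
     * (qint q (n - R) * qint q (m - S) / (qint q c)^2)
     * qbinom q n r * qbinom q m s
     * qmultinom q r alpha * qmultinom q s beta
     * qmultinom q c lam * qmultinom q c mu"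

end

theory Submission
  imports Defs "HOL-Computational_Algebra.Fundamental_Theorem_Algebra"
begin

text \<open>Clearing denominators, \<open>2 Kre\<^sub>q\<close> is \<open>q\<^sup>E\<close> times the quotient of the products of the
  \<open>q\<close>-integers \<open>[k]\<^sub>q\<close> over two explicit multisets \<open>N\<close> and \<open>D\<close> of positive integers. Over \<open>\<complex>\<close>,
  \<open>[k]\<^sub>q\<close> is the product of \<open>q - z\<close> over the roots of unity \<open>z \<noteq> 1\<close> with \<open>z\<^sup>k = 1\<close>, so the
  quotient is a polynomial as soon as every \<open>d > 0\<close> divides at least as many elements of \<open>N\<close> as of
  \<open>D\<close>. For the partitions at hand this count inequality reduces to floor estimates on their
  multiplicities: if all multiplicities of a partition are divisible by \<open>d\<close>, then so are its length
  and its size. Finally \<open>E \<ge> 0\<close> because \<open>\<tau>(\<lambda>) \<le> k(N - k)\<close> for \<open>\<lambda> \<in> Par(N, k)\<close>.\<close>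

section \<open>Divisibility of polynomials via root multiplicities\<close>

lemma map_poly_of_rat_add:
  "map_poly (of_rat :: rat \<Rightarrow> 'a::field_char_0) (p + q) = map_poly of_rat p + map_poly of_rat q"
  by (intro poly_eqI) (simp add: coeff_map_poly of_rat_add)

lemma map_poly_of_rat_mult:
  "map_poly (of_rat :: rat \<Rightarrow> 'a::field_char_0) (p * q) = map_poly of_rat p * map_poly of_rat q"
  by (intro poly_eqI) (simp add: coeff_map_poly coeff_mult of_rat_sum of_rat_mult)

lemma complex_poly_dvd_if_order_le:
  fixes p q :: "complex poly"
  assumes "p \<noteq> 0" and "\<And>z. order z p \<le> order z q"
  shows "p dvd q"
  using assms
proof (induction "degree p" arbitrary: p q rule: less_induct)
  case less
  show ?case
  proof (cases "degree p = 0 \<or> q = 0")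
    case True
    then show ?thesis
      using less.prems(1) is_unit_iff_degree unit_imp_dvd by auto
  next
    case False
    then have "q \<noteq> 0" and "\<not> constant (poly p)"
      by (auto simp: constant_degree)
    then obtain z where "poly p z = 0"
      using fundamental_theorem_of_algebra by blast
    then have "order z q > 0"
      using less.prems order_gt_0_iff[of p z] by (metis gr0I le_zero_eq)
    then have "poly q z = 0"
      using \<open>q \<noteq> 0\<close> order_gt_0_iff by blast
    obtain p' q' where p': "p = [:-z, 1:] * p'" and q': "q = [:-z, 1:] * q'"
      using \<open>poly p z = 0\<close> \<open>poly q z = 0\<close> by (meson poly_eq_0_iff_dvd dvdE)
    have "p' \<noteq> 0" "q' \<noteq> 0"
      using p' q' less.prems(1) \<open>q \<noteq> 0\<close> by auto
    have "order w p' \<le> order w q'" for w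
    proof -
      have "order w p = order w [:-z, 1:] + order w p'"
        using p' less.prems(1) by (metis order_mult)
      moreover have "order w q = order w [:-z, 1:] + order w q'"
        using q' \<open>q \<noteq> 0\<close> by (metis order_mult)
      ultimately show ?thesis
        using less.prems(2)[of w] by linarith
    qed
    moreover have "degree p' < degree p"
      unfolding p' using \<open>p' \<noteq> 0\<close> by (subst degree_mult_eq) auto
    ultimately have "p' dvd q'"
      using less.hyps \<open>p' \<noteq> 0\<close> by blast
    then show ?thesis
      unfolding p' q' by (rule mult_dvd_mono[OF dvd_refl])
  qed
qed

lemma rat_poly_dvd_if_complex_dvd:
  fixes p q :: "rat poly"
  assumes "(map_poly of_rat p :: complex poly) dvd map_poly of_rat q"
  shows "p dvd q"
proof (rule ccontr)
  let ?c = "map_poly (of_rat :: rat \<Rightarrow> complex)"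
  assume "\<not> p dvd q"
  then have "q mod p \<noteq> 0" and "p \<noteq> 0"
    using assms by (auto simp: mod_eq_0_iff_dvd map_poly_eq_0_iff)
  have "?c q = ?c (p * (q div p) + q mod p)"
    by simp
  then have "?c q = ?c p * ?c (q div p) + ?c (q mod p)"
    by (simp only: map_poly_of_rat_add map_poly_of_rat_mult)
  then have "?c p dvd ?c (q mod p)"
    using assms by (metis dvd_add_right_iff dvd_triv_left)
  moreover have "?c (q mod p) \<noteq> 0"
    using \<open>q mod p \<noteq> 0\<close> by (simp add: map_poly_eq_0_iff)
  ultimately have "degree (?c p) \<le> degree (?c (q mod p))"
    by (rule dvd_imp_degree_le)
  then have "degree p \<le> degree (q mod p)"
    by (simp add: degree_map_poly)
  then show False
    using degree_mod_less'[OF \<open>p \<noteq> 0\<close> \<open>q mod p \<noteq> 0\<close>] by simp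
qed

section \<open>\<open>q\<close>-integers as polynomials\<close>

primrec qint_poly :: "nat \<Rightarrow> 'a::comm_ring_1 poly" where
  "qint_poly 0 = 0"
| "qint_poly (Suc k) = pCons 1 (qint_poly k)"

lemma poly_qint_poly: "poly (qint_poly k) x = (\<Sum>i<k. x ^ i)"
  by (induction k)
     (simp_all add: sum.lessThan_Suc_shift sum_distrib_left power_Suc del: sum.lessThan_Suc)

lemma poly_qint_poly_eq_qint: "(q::real) \<noteq> 1 \<Longrightarrow> poly (qint_poly k) q = qint q k"
  by (simp add: poly_qint_poly sum_gp_strict qint_def)

lemma map_poly_of_rat_qint_poly:
  "map_poly (of_rat :: rat \<Rightarrow> 'a::field_char_0) (qint_poly k) = qint_poly k"
  by (induction k) (simp_all add: map_poly_pCons)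

lemma qint_poly_nonzero: "k > 0 \<Longrightarrow> qint_poly k \<noteq> 0"
  by (cases k) auto

lemma linear_times_qint_poly:
  "[:-1, 1:] * (qint_poly k :: 'a::{idom,ring_char_0} poly) = monom 1 k - 1"
  by (rule poly_eq_poly_eq_iff[THEN iffD1], rule ext)
     (simp add: poly_qint_poly poly_monom power_diff_1_eq algebra_simps)

lemma order_monom_minus_one:
  fixes z :: "'a::field_char_0"
  assumes "k > 0"
  shows "order z (monom 1 k - 1) = of_bool (z ^ k = 1)"
proof (cases "z ^ k = 1")
  case True
  have "coeff (monom 1 k - 1 :: 'a poly) k = 1"
    using assms by (simp only: coeff_diff coeff_monom coeff_1) simp
  then have "(monom 1 k - 1 :: 'a poly) \<noteq> 0"
    by (metis coeff_0 zero_neq_one)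
  moreover have "z \<noteq> 0"
    using True assms by (auto simp: power_0_left)
  then have "order z (pderiv (monom 1 k - 1)) = 0"
    using assms by (intro order_0I) (simp add: pderiv_diff pderiv_monom poly_monom)
  ultimately show ?thesis
    using True order_pderiv[of "monom 1 k - 1" z] by (simp add: poly_monom)
next
  case False
  then show ?thesis
    by (simp add: order_0I poly_monom)
qed

lemma order_qint_poly:
  fixes z :: "'a::field_char_0"
  assumes "k > 0"
  shows "order z (qint_poly k) = of_bool (z \<noteq> 1 \<and> z ^ k = 1)"
proof -
  have "order z [:-1, 1:] = of_bool (z = 1)"
    using order_power_n_n[of 1 1] by (cases "z = 1") (simp_all add: order_0I)
  moreover have "order z ([:-1, 1:] * qint_poly k) = order z [:-1, 1:] + order z (qint_poly k)"
    using qint_poly_nonzero[OF assms] by (intro order_mult) (simp del: mult_pCons_left)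
  ultimately show ?thesis
    unfolding linear_times_qint_poly order_monom_minus_one[OF assms] by auto
qed

lemma qint_pos:
  assumes "(q::real) > 0" and "q \<noteq> 1" and "k > 0"
  shows "qint q k > 0"
proof -
  have "qint q k = (\<Sum>i<k. q ^ i)"
    using assms(2) by (simp flip: poly_qint_poly_eq_qint add: poly_qint_poly)
  also have "\<dots> > 0"
    using assms(1,3) by (intro sum_pos) auto
  finally show ?thesis .
qed

lemma qfact_pos: "(q::real) > 0 \<Longrightarrow> q \<noteq> 1 \<Longrightarrow> qfact q k > 0"
  unfolding qfact_def by (intro prod_pos) (auto intro: qint_pos)

lemma prod_qint_pos:
  "(q::real) > 0 \<Longrightarrow> q \<noteq> 1 \<Longrightarrow> 0 \<notin># M \<Longrightarrow> (\<Prod>k\<in>#M. qint q k) > 0"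
  by (induction M) (auto intro!: mult_pos_pos qint_pos)

definition qint_prod_poly :: "nat multiset \<Rightarrow> 'a::comm_ring_1 poly" where
  "qint_prod_poly M = (\<Prod>k\<in>#M. qint_poly k)"

lemma map_poly_of_rat_qint_prod_poly:
  "map_poly (of_rat :: rat \<Rightarrow> 'a::field_char_0) (qint_prod_poly M) = qint_prod_poly M"
  unfolding qint_prod_poly_def
  by (induction M) (simp_all add: map_poly_of_rat_mult map_poly_of_rat_qint_poly)

lemma poly_qint_prod_poly_eq:
  "(q::real) \<noteq> 1 \<Longrightarrow> poly (qint_prod_poly M) q = (\<Prod>k\<in>#M. qint q k)"
  unfolding qint_prod_poly_def by (induction M) (simp_all add: poly_qint_poly_eq_qint)

lemma qint_prod_poly_nonzero: "0 \<notin># M \<Longrightarrow> (qint_prod_poly M :: 'a::idom poly) \<noteq> 0"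
  unfolding qint_prod_poly_def by (induction M) (auto simp: qint_poly_nonzero)

lemma order_qint_prod_poly:
  fixes z :: "'a::field_char_0"
  assumes "0 \<notin># M"
  shows "order z (qint_prod_poly M) = size {#k \<in># M. z \<noteq> 1 \<and> z ^ k = 1#}"
  using assms
proof (induction M)
  case (add k M)
  have "qint_prod_poly (add_mset k M) = qint_poly k * (qint_prod_poly M :: 'a poly)"
    by (simp add: qint_prod_poly_def)
  then have "order z (qint_prod_poly (add_mset k M))
      = order z (qint_poly k :: 'a poly) + order z (qint_prod_poly M :: 'a poly)"
    using qint_prod_poly_nonzero[OF add.prems] by (metis order_mult)
  then show ?case
    using add order_qint_poly[of k z] by auto
qed (simp add: qint_prod_poly_def)

section \<open>Quotients of products of \<open>q\<close>-integers\<close>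

lemma power_eq_one_iff_dvd_least:
  fixes z :: "'a::monoid_mult"
  assumes "z ^ d = 1" and "d > 0" and least: "\<And>j. 0 < j \<Longrightarrow> j < d \<Longrightarrow> z ^ j \<noteq> 1"
  shows "z ^ k = 1 \<longleftrightarrow> d dvd k"
proof
  have "z ^ k = z ^ (d * (k div d) + k mod d)"
    by simp
  also have "\<dots> = (z ^ d) ^ (k div d) * z ^ (k mod d)"
    by (simp only: power_add power_mult)
  also have "\<dots> = z ^ (k mod d)"
    using assms(1) by simp
  finally have "z ^ k = z ^ (k mod d)" .
  moreover assume "z ^ k = 1"
  ultimately have "z ^ (k mod d) = 1"
    by simp
  then have "\<not> 0 < k mod d"
    using least[of "k mod d"] \<open>d > 0\<close> by auto
  then show "d dvd k"
    by (simp add: dvd_eq_mod_eq_0)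
qed (use assms(1) in \<open>auto simp: power_mult\<close>)

lemma power_eq_one_period:
  fixes z :: "'a::monoid_mult"
  obtains "\<And>k. k > 0 \<Longrightarrow> z ^ k \<noteq> 1"
  | d where "d > 0" and "\<And>k. z ^ k = 1 \<longleftrightarrow> d dvd k"
proof (cases "\<exists>k>0. z ^ k = 1")
  case True
  define d where "d = (LEAST k. k > 0 \<and> z ^ k = 1)"
  have "z ^ d = 1" and "d > 0"
    using LeastI_ex[OF True] unfolding d_def by auto
  moreover have "z ^ j \<noteq> 1" if "0 < j" "j < d" for j
    using not_less_Least[of j "\<lambda>k. k > 0 \<and> z ^ k = 1"] that unfolding d_def by blast
  ultimately have "z ^ k = 1 \<longleftrightarrow> d dvd k" for k
    by (rule power_eq_one_iff_dvd_least)
  with \<open>d > 0\<close> show ?thesis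
    by (rule that(2))
qed (use that(1) in blast)

definition count_multiples :: "nat \<Rightarrow> nat multiset \<Rightarrow> nat" where
  "count_multiples d M = size {#k \<in># M. d dvd k#}"

lemma count_multiples_empty [simp]: "count_multiples d {#} = 0"
  by (simp add: count_multiples_def)

lemma count_multiples_add_mset [simp]:
  "count_multiples d (add_mset k M) = of_bool (d dvd k) + count_multiples d M"
  by (simp add: count_multiples_def)

lemma count_multiples_union [simp]:
  "count_multiples d (M + N) = count_multiples d M + count_multiples d N"
  by (simp add: count_multiples_def)

lemma count_multiples_sum:
  "count_multiples d (\<Sum>i\<in>I. M i) = (\<Sum>i\<in>I. count_multiples d (M i))"
  by (induction I rule: infinite_finite_induct) simp_all

lemma qint_prod_poly_dvd:
  assumes "0 \<notin># D" and "0 \<notin># N"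
    and "\<And>d. d > 0 \<Longrightarrow> count_multiples d D \<le> count_multiples d N"
  shows "(qint_prod_poly D :: rat poly) dvd qint_prod_poly N"
proof (rule rat_poly_dvd_if_complex_dvd, rule complex_poly_dvd_if_order_le)
  show "map_poly of_rat (qint_prod_poly D) \<noteq> (0 :: complex poly)"
    using qint_prod_poly_nonzero[OF assms(1)] by (simp add: map_poly_of_rat_qint_prod_poly)
  fix z :: complex
  let ?roots = "\<lambda>M. {#k \<in># M. z \<noteq> 1 \<and> z ^ k = 1#}"
  have "size (?roots D) \<le> size (?roots N)"
  proof (cases "z = 1")
    case False
    show ?thesis
    proof (cases z rule: power_eq_one_period)
      case 1
      have "\<not> (z \<noteq> 1 \<and> z ^ k = 1)" if "k \<in># D" for k
        using 1[of k] assms(1) that by (cases k) auto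
      then have "?roots D = {#}"
        by simp
      then show ?thesis
        by (simp del: filter_mset_eq_mempty_iff)
    next
      case (2 d)
      then have "?roots M = {#k \<in># M. d dvd k#}" for M
        using \<open>z \<noteq> 1\<close> by (intro filter_mset_cong) auto
      then show ?thesis
        using assms(3)[OF \<open>d > 0\<close>] by (simp add: count_multiples_def)
    qed
  qed simp
  then show "order z (map_poly of_rat (qint_prod_poly D))
      \<le> order z (map_poly of_rat (qint_prod_poly N) :: complex poly)"
    by (simp add: map_poly_of_rat_qint_prod_poly order_qint_prod_poly assms(1,2))
qed

lemma qint_prod_quotient_eq_poly:
  assumes "0 \<notin># D" and "0 \<notin># N"
    and "\<And>d. d > 0 \<Longrightarrow> count_multiples d D \<le> count_multiples d N"
  shows "\<exists>Q :: rat poly. \<forall>q :: real. q > 0 \<and> q \<noteq> 1 \<longrightarrow>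
      (\<Prod>k\<in>#N. qint q k) / (\<Prod>k\<in>#D. qint q k) = poly (map_poly of_rat Q) q"
proof -
  have "(qint_prod_poly D :: rat poly) dvd qint_prod_poly N"
    using assms by (rule qint_prod_poly_dvd)
  then obtain Q :: "rat poly" where Q: "qint_prod_poly N = qint_prod_poly D * Q"
    by (elim dvdE)
  have "(\<Prod>k\<in>#N. qint q k) / (\<Prod>k\<in>#D. qint q k) = poly (map_poly of_rat Q) q"
    if "q > 0" and "q \<noteq> 1" for q :: real
  proof -
    have "(\<Prod>k\<in>#N. qint q k) = (\<Prod>k\<in>#D. qint q k) * poly (map_poly of_rat Q) q"
      using arg_cong[OF Q, of "\<lambda>P. poly (map_poly of_rat P) q"] that
      by (simp add: map_poly_of_rat_mult map_poly_of_rat_qint_prod_poly poly_qint_prod_poly_eq)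
    moreover have "(\<Prod>k\<in>#D. qint q k) \<noteq> 0"
      using prod_qint_pos[OF that assms(1)] by linarith
    ultimately show ?thesis
      by (metis nonzero_mult_div_cancel_left)
  qed
  then show ?thesis
    by blast
qed

section \<open>Multiples of \<open>d\<close> among the factors of \<open>q\<close>-factorials\<close>

lemma Par_size_le: "A \<in> Par N k \<Longrightarrow> k \<le> N"
proof (induction A arbitrary: N k)
  case (add x A)
  then show ?case
    by (fastforce simp: Par_def)
qed (simp add: Par_def)

lemma sum_mset_eq_sum_count:
  "finite S \<Longrightarrow> set_mset A \<subseteq> S \<Longrightarrow> sum_mset A = (\<Sum>x\<in>S. count A x * x)"
proof (induction A)
  case (add a A)
  have "(\<Sum>x\<in>S. count (add_mset a A) x * x)
      = (\<Sum>x\<in>S. count A x * x + (if x = a then x else 0))"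
    by (intro sum.cong) auto
  also have "\<dots> = (\<Sum>x\<in>S. count A x * x) + a"
    using add.prems by (simp add: sum.distrib)
  finally show ?case
    using add by simp
qed simp

lemma div_add_div_le:
  "(a::nat) div d + b div d + of_bool (d dvd (a + b) \<and> \<not> d dvd b) \<le> (a + b) div d"
proof (cases "d dvd (a + b) \<and> \<not> d dvd b")
  case True
  then have "d > 0"
    by (cases "d = 0") auto
  have "b mod d > 0"
    using True by (simp add: dvd_eq_mod_eq_0)
  have "(a mod d + b mod d) mod d = 0"
    using True by (simp add: mod_add_eq dvd_eq_mod_eq_0)
  have "d \<le> a mod d + b mod d"
  proof (rule ccontr)
    assume "\<not> d \<le> a mod d + b mod d"
    then have "(a mod d + b mod d) mod d = a mod d + b mod d"
      by simp
    with \<open>(a mod d + b mod d) mod d = 0\<close> \<open>b mod d > 0\<close> show False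
      by simp
  qed
  then have "0 < (a mod d + b mod d) div d"
    using \<open>d > 0\<close> by (simp add: div_greater_zero_iff)
  then show ?thesis
    using True div_add1_eq[of a b d] by simp
next
  case False
  then have "of_bool (d dvd (a + b) \<and> \<not> d dvd b) = (0::nat)"
    by simp
  then show ?thesis
    using div_add1_eq[of a b d] by linarith
qed

definition qfact_mset :: "nat \<Rightarrow> nat multiset" where
  "qfact_mset k = mset_set {1..k}"

definition qmultinom_denom_mset :: "nat multiset \<Rightarrow> nat multiset" where
  "qmultinom_denom_mset A = (\<Sum>i\<in>set_mset A. qfact_mset (count A i))"

lemma qfact_mset_0 [simp]: "qfact_mset 0 = {#}"
  by (simp add: qfact_mset_def)

lemma qfact_mset_Suc [simp]: "qfact_mset (Suc k) = add_mset (Suc k) (qfact_mset k)"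
  by (simp add: qfact_mset_def atLeastAtMostSuc_conv)

lemma zero_not_in_qfact_mset: "0 \<notin># qfact_mset k"
  by (simp add: qfact_mset_def)

lemma zero_not_in_qmultinom_denom_mset: "0 \<notin># qmultinom_denom_mset A"
proof -
  have "count (qmultinom_denom_mset A) 0 = 0"
    by (simp add: qmultinom_denom_mset_def count_sum qfact_mset_def)
  then show ?thesis
    by (simp add: count_eq_zero_iff)
qed

lemma prod_qint_qfact_mset: "(\<Prod>k\<in>#qfact_mset n. qint q k) = qfact q n"
  by (induction n) (simp_all add: qfact_def atLeastAtMostSuc_conv mult.commute)

lemma prod_qint_qmultinom_denom_mset:
  "(\<Prod>k\<in>#qmultinom_denom_mset A. qint q k) = (\<Prod>i\<in>set_mset A. qfact q (count A i))"
proof -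
  have "(\<Prod>k\<in>#(\<Sum>i\<in>I. M i). qint q k) = (\<Prod>i\<in>I. \<Prod>k\<in>#M i. qint q k)"
    for I and M :: "nat \<Rightarrow> nat multiset"
    by (induction I rule: infinite_finite_induct) simp_all
  then show ?thesis
    by (simp add: qmultinom_denom_mset_def prod_qint_qfact_mset)
qed

lemma count_multiples_qfact_mset: "d > 0 \<Longrightarrow> count_multiples d (qfact_mset k) = k div d"
  by (induction k) (simp_all add: div_Suc dvd_eq_mod_eq_0)

lemma count_multiples_qmultinom_denom_mset:
  "d > 0 \<Longrightarrow> count_multiples d (qmultinom_denom_mset A) = (\<Sum>i\<in>set_mset A. count A i div d)"
  by (simp add: qmultinom_denom_mset_def count_multiples_sum count_multiples_qfact_mset)

text \<open>If all multiplicities of \<open>A\<close> are divisible by \<open>d\<close>, then so are both \<open>size A\<close> and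
  \<open>sum_mset A\<close>; otherwise the floors lose at least one.\<close>
lemma count_multiples_qmultinom_denom_le:
  assumes "d > 0"
  shows "count_multiples d (qmultinom_denom_mset A) + of_bool (d dvd size A \<and> \<not> d dvd sum_mset A)
    \<le> size A div d"
proof -
  let ?S = "\<Sum>i\<in>set_mset A. count A i div d"
  have size_eq: "size A = (\<Sum>i\<in>set_mset A. count A i)"
    by (rule size_multiset_overloaded_eq)
  have "d * ?S = (\<Sum>i\<in>set_mset A. d * (count A i div d))"
    by (simp add: sum_distrib_left)
  also have "\<dots> \<le> size A"
    unfolding size_eq by (intro sum_mono) simp
  finally have le: "d * ?S \<le> size A" .
  show ?thesis
  proof (cases "d dvd size A \<and> \<not> d dvd sum_mset A")
    case True
    have "\<exists>i\<in>#A. \<not> d dvd count A i"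
    proof (rule ccontr)
      assume "\<not> ?thesis"
      then have "d dvd (\<Sum>i\<in>set_mset A. count A i * i)"
        by (auto intro!: dvd_sum)
      with True show False
        by (simp add: sum_mset_eq_sum_count[of "set_mset A" A])
    qed
    then obtain i where "i \<in># A" and "count A i mod d > 0"
      by (auto simp: dvd_eq_mod_eq_0)
    moreover have "d * (count A i div d) + count A i mod d = count A i"
      by (rule mult_div_mod_eq)
    ultimately have "d * (count A i div d) < count A i"
      by linarith
    then have "(\<Sum>i\<in>set_mset A. d * (count A i div d)) < size A"
      unfolding size_eq using \<open>i \<in># A\<close> by (intro sum_strict_mono_ex1) auto
    then have "d * ?S < d * (size A div d)"
      using True by (simp add: sum_distrib_left)
    then have "?S < size A div d"
      by simp
    then show ?thesis
      using True assms by (simp add: count_multiples_qmultinom_denom_mset)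
  next
    case False
    have "?S \<le> size A div d"
      using le assms by (simp add: less_eq_div_iff_mult_less_eq mult.commute)
    moreover have "of_bool (d dvd size A \<and> \<not> d dvd sum_mset A) = (0::nat)"
      using False by simp
    ultimately show ?thesis
      by (simp only: count_multiples_qmultinom_denom_mset[OF assms] add_0_right)
  qed
qed

lemma count_multiples_qbinom_qmultinom_denom_le:
  assumes "d > 0" and "A \<in> Par R r" and "R \<le> N"
  shows "(N - r) div d + count_multiples d (qmultinom_denom_mset A)
      + of_bool (d dvd N \<and> \<not> d dvd (N - R)) \<le> N div d"
proof -
  have "r \<le> R"
    using assms(2) by (rule Par_size_le)
  have "size A = r" and "sum_mset A = R"
    using assms(2) by (auto simp: Par_def)
  then have "count_multiples d (qmultinom_denom_mset A) + of_bool (d dvd r \<and> \<not> d dvd R) \<le> r div d"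
    using count_multiples_qmultinom_denom_le[OF assms(1), of A] by simp
  moreover have "(N - r) div d + r div d + of_bool (d dvd N \<and> \<not> d dvd r) \<le> N div d"
    using div_add_div_le[of "N - r" d r] \<open>r \<le> R\<close> \<open>R \<le> N\<close> by simp
  moreover have "of_bool (d dvd N \<and> \<not> d dvd (N - R))
      \<le> of_bool (d dvd r \<and> \<not> d dvd R) + (of_bool (d dvd N \<and> \<not> d dvd r) :: nat)"
    using dvd_diff_nat[of d N R] by auto
  ultimately show ?thesis
    by linarith
qed

section \<open>The annular \<open>q\<close>-Kreweras number\<close>

lemma member_le_sum_mset: "x \<in># M \<Longrightarrow> x \<le> sum_mset (M :: nat multiset)"
  by (induction M) auto

lemma sum_conj_part_Suc:
  assumes "\<forall>x\<in>#L. x \<le> Suc K"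
  shows "(\<Sum>i\<in>{1..K}. conj_part L (Suc i)) = (\<Sum>x\<in>#L. x - 1)"
  using assms
proof (induction L)
  case (add a L)
  have "(\<Sum>i\<in>{1..K}. conj_part (add_mset a L) (Suc i))
      = (\<Sum>i\<in>{1..K}. conj_part L (Suc i) + of_bool (Suc i \<le> a))"
    by (intro sum.cong) (auto simp: conj_part_def)
  also have "\<dots> = (\<Sum>i\<in>{1..K}. conj_part L (Suc i)) + card {i\<in>{1..K}. Suc i \<le> a}"
    by (simp add: sum.distrib of_bool_def sum.If_cases Int_def)
  also have "{i\<in>{1..K}. Suc i \<le> a} = {1..a - 1}"
    using add.prems by auto
  finally show ?case
    using add by simp
qed (simp add: conj_part_def)

lemma tau_le:
  assumes "lam \<in> Par N k"
  shows "tau lam \<le> k * (N - k)"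
proof -
  have lam: "0 \<notin># lam" "size lam = k" "sum_mset lam = N"
    using assms by (auto simp: Par_def)
  have parts_le: "\<forall>x\<in>#lam. x \<le> Suc N"
    using member_le_sum_mset[of _ lam] lam(3) by (simp add: le_SucI)
  have "conj_part lam i \<le> k" for i
    unfolding conj_part_def using lam(2) by (metis size_filter_mset_lesseq)
  then have "tau lam \<le> (\<Sum>i\<in>{1..N}. k * conj_part lam (Suc i))"
    unfolding tau_def lam(3) by (intro sum_mono mult_right_mono) simp_all
  also have "\<dots> = k * (\<Sum>x\<in>#lam. x - 1)"
    by (simp only: sum_distrib_left[symmetric] sum_conj_part_Suc[OF parts_le])
  also have "(\<Sum>x\<in>#lam. x - 1) = N - k"
  proof -
    have "(\<Sum>x\<in>#lam. x - 1) + size lam = sum_mset lam"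
      using lam(1) by (induction lam) auto
    then show ?thesis
      using lam by simp
  qed
  finally show ?thesis .
qed

text \<open>Each \<open>\<tau>\<close> is cancelled by the term \<open>r(R - r)\<close>, \<open>s(S - s)\<close>, \<open>c(n - R - c)\<close> or \<open>c(m - S - c)\<close>
  of the same partition, and all remaining terms are nonnegative.\<close>
lemma kre_exp_nonneg:
  assumes "c > 0" and "alpha \<in> Par R r" and "beta \<in> Par S s"
    and "lam \<in> Par (n - R) c" and "mu \<in> Par (m - S) c"
  shows "kre_exp n m c r s R S alpha beta lam mu \<ge> 0"
proof -
  have tau_le_int: "int (tau A) \<le> int k * (int N - int k)" if "A \<in> Par N k" for A N k
  proof -
    have "k \<le> N"
      using that by (rule Par_size_le)
    then show ?thesis
      using tau_le[OF that] by (metis of_nat_diff of_nat_le_iff of_nat_mult)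
  qed
  have "r \<le> R" "s \<le> S" "c \<le> n - R" "c \<le> m - S"
    using assms(2-5) by (auto dest: Par_size_le)
  then have "int (n - R) = int n - int R" "int (m - S) = int m - int S"
    and "int c + int R \<le> int n" "int c + int S \<le> int m"
    using \<open>c > 0\<close> by simp_all
  moreover from this(3,4) have "int r * (int c + int R) \<le> int r * int n"
    and "int s * (int c + int S) \<le> int s * int m"
    by (simp_all add: mult_left_mono)
  moreover have "int c \<le> int c * int c"
    using \<open>c > 0\<close> by simp
  moreover have nonneg: "0 \<le> int c * int r" "0 \<le> int c * int s" "0 \<le> int r * int r" "0 \<le> int s * int s"
    by simp_all
  ultimately show ?thesis
    using tau_le_int[OF assms(2)] tau_le_int[OF assms(3)] tau_le_int[OF assms(4)]
      tau_le_int[OF assms(5)]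
    unfolding kre_exp_def Let_def by (simp add: algebra_simps) (use nonneg in linarith)
qed

definition kre_numer_mset :: "nat \<Rightarrow> nat \<Rightarrow> nat \<Rightarrow> nat \<Rightarrow> nat \<Rightarrow> nat \<Rightarrow> nat \<Rightarrow> nat multiset" where
  "kre_numer_mset n m c r s R S =
     {#n * m, 2 * c, n - R, m - S#} + qfact_mset n + qfact_mset m + qfact_mset r + qfact_mset s
     + qfact_mset c + qfact_mset c"

definition kre_denom_mset :: "nat \<Rightarrow> nat \<Rightarrow> nat \<Rightarrow> nat \<Rightarrow> nat \<Rightarrow>
    nat multiset \<Rightarrow> nat multiset \<Rightarrow> nat multiset \<Rightarrow> nat multiset \<Rightarrow> nat multiset" where
  "kre_denom_mset n m c r s alpha beta lam mu =
     {#n, m, c, c#} + qfact_mset r + qfact_mset (n - r) + qfact_mset s + qfact_mset (m - s)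
     + qmultinom_denom_mset alpha + qmultinom_denom_mset beta
     + qmultinom_denom_mset lam + qmultinom_denom_mset mu"

lemma count_multiples_kre_denom_le:
  assumes "c > 0" and "alpha \<in> Par R r" and "beta \<in> Par S s"
    and "lam \<in> Par (n - R) c" and "mu \<in> Par (m - S) c" and "d > 0"
  shows "count_multiples d (kre_denom_mset n m c r s alpha beta lam mu)
    \<le> count_multiples d (kre_numer_mset n m c r s R S)"
proof -
  have "R \<le> n" "S \<le> m"
    using assms(1,4,5) by (auto dest!: Par_size_le)
  have inner:
    "count_multiples d (qmultinom_denom_mset A) + of_bool (d dvd c \<and> \<not> d dvd N) \<le> c div d"
    if "A \<in> Par N c" for A N
    using count_multiples_qmultinom_denom_le[OF assms(6), of A] that by (simp add: Par_def)
  \<comment> \<open>The last four indicators are the slack left by the estimates for the four partitions.\<close>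
  have "of_bool (d dvd n) + of_bool (d dvd m) + 2 * of_bool (d dvd c)
      \<le> of_bool (d dvd n * m) + of_bool (d dvd 2 * c) + of_bool (d dvd n - R) + of_bool (d dvd m - S)
        + of_bool (d dvd n \<and> \<not> d dvd (n - R)) + of_bool (d dvd m \<and> \<not> d dvd (m - S))
        + of_bool (d dvd c \<and> \<not> d dvd (n - R)) + (of_bool (d dvd c \<and> \<not> d dvd (m - S)) :: nat)"
    by auto
  then show ?thesis
    using count_multiples_qbinom_qmultinom_denom_le[OF assms(6,2) \<open>R \<le> n\<close>]
      count_multiples_qbinom_qmultinom_denom_le[OF assms(6,3) \<open>S \<le> m\<close>]
      inner[OF assms(4)] inner[OF assms(5)]
    unfolding kre_numer_mset_def kre_denom_mset_def
    by (simp add: count_multiples_qfact_mset assms(6))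
qed

lemma annular_kre_eq_quotient:
  fixes q :: real
  assumes "q > 0" and "q \<noteq> 1" and "n > 0" and "m > 0" and "c > 0"
  shows "annular_kre q n m c r s R S alpha beta lam mu
    = q powi kre_exp n m c r s R S alpha beta lam mu
      * ((\<Prod>k\<in>#kre_numer_mset n m c r s R S. qint q k)
        / (\<Prod>k\<in>#kre_denom_mset n m c r s alpha beta lam mu. qint q k)) / 2"
proof -
  have "qint q k \<noteq> 0" if "k > 0" for k
    using qint_pos[OF assms(1,2) that] by simp
  moreover have qfact_nonzero: "qfact q k \<noteq> 0" for k
    using qfact_pos[OF assms(1,2), of k] by linarith
  moreover have "(\<Prod>i\<in>set_mset A. qfact q (count A i)) \<noteq> 0" for A
    using qfact_nonzero by (simp add: prod_zero_iff)
  ultimately show ?thesis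
    unfolding annular_kre_def qbinom_def qmultinom_def kre_numer_mset_def kre_denom_mset_def
    using assms(3-5)
    by (simp add: prod_qint_qfact_mset prod_qint_qmultinom_denom_mset field_simps power2_eq_square)
qed

theorem proposition3p2:
  fixes n m c r s R S :: nat and alpha beta lam mu :: "nat multiset"
  assumes "n > 0" and "m > 0" and "c > 0"
    and "alpha \<in> Par R r" and "beta \<in> Par S s"
    and "lam \<in> Par (n - R) c" and "mu \<in> Par (m - S) c"
  shows "\<exists>p :: rat poly. \<forall>q :: real. q > 0 \<and> q \<noteq> 1 \<longrightarrow>
           annular_kre q n m c r s R S alpha beta lam mu = poly (map_poly of_rat p) q"
proof -
  let ?E = "kre_exp n m c r s R S alpha beta lam mu"
  let ?N = "kre_numer_mset n m c r s R S"
  let ?D = "kre_denom_mset n m c r s alpha beta lam mu"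
  have D: "0 \<notin># ?D" and N: "0 \<notin># ?N"
    using assms(1-3) Par_size_le[OF assms(6)] Par_size_le[OF assms(7)]
    by (auto simp: kre_numer_mset_def kre_denom_mset_def zero_not_in_qfact_mset
        zero_not_in_qmultinom_denom_mset)
  obtain Q :: "rat poly" where Q: "\<forall>q :: real. q > 0 \<and> q \<noteq> 1 \<longrightarrow>
      (\<Prod>k\<in>#?N. qint q k) / (\<Prod>k\<in>#?D. qint q k) = poly (map_poly of_rat Q) q"
    using qint_prod_quotient_eq_poly[OF D N count_multiples_kre_denom_le[OF assms(3-7)]] by blast
  have E: "q powi ?E = q ^ nat ?E" for q :: real
    using kre_exp_nonneg[OF assms(3-7)] by (simp add: power_int_def)
  show ?thesis
  proof (intro exI allI impI)
    fix q :: real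
    assume q: "q > 0 \<and> q \<noteq> 1"
    have "annular_kre q n m c r s R S alpha beta lam mu
        = q powi ?E * ((\<Prod>k\<in>#?N. qint q k) / (\<Prod>k\<in>#?D. qint q k)) / 2"
      using q assms(1-3) by (intro annular_kre_eq_quotient) auto
    also have "\<dots> = q ^ nat ?E * poly (map_poly of_rat Q) q / 2"
      by (simp only: E Q[rule_format, OF q])
    also have "\<dots> = poly (map_poly of_rat ([:1/2:] * (monom 1 (nat ?E) * Q))) q"
      unfolding map_poly_of_rat_mult
      by (simp add: map_poly_monom map_poly_pCons of_rat_divide poly_monom)
    finally show "annular_kre q n m c r s R S alpha beta lam mu
        = poly (map_poly of_rat ([:1/2:] * (monom 1 (nat ?E) * Q))) q" .
  qed
qed

end
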